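(* Let $f(t)=t^6+r_1t^5+r_2t^4+r_3t^3+r_4t^2+r_5t+r_6\in\mathbb{R}[t]$ and suppose that all roots of $f$ (counted in $\mathbb{C}$) are real and strictly positive. Then: (1) $r_1<0$; (2) $r_2>0$ and $r_2\le \frac{5}{12}r_1^2$; (3) $r_3<0$ and, writing $D=25r_1^2-60r_2$ (which is $\ge 0$ by (2)), $$-\tfrac13 r_1^2\sqrt{D}+\tfrac{1}{225}D^{3/2}+\tfrac45 r_2\sqrt{D}\;\le\;\tfrac{10}{9}r_1^3-4r_1r_2+6r_3\;\le\;\tfrac13 r_1^2\sqrt{D}-\tfrac{1}{225}D^{3/2}-\tfrac45 r_2\sqrt{D};$$ (4) $r_4>0$; (5) $r_5<0$. *)

theory Defs
  imports Complex_Main "HOL-Computational_Algebra.Polynomial"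
begin

end

(*
  Write f = (t - a_1) ... (t - a_6) with all a_i > 0.  The reflected polynomial (1 - a_1 t) ... (1 - a_6 t)
  has k-th coefficient (-1)^k e_k(a), which gives the signs of r_1, ..., r_5.  By Newton's identities,
  with y_i = a_i - (a_1 + ... + a_6) / 6 the centred roots, D = 30 \<Sum> y_i^2 and
  10/9 r_1^3 - 4 r_1 r_2 + 6 r_3 = -2 \<Sum> y_i^3, so (2) is D \<ge> 0 and (3) is the sharp bound
  |\<Sum> y_i^3| \<le> (n - 2) / sqrt (n (n - 1)) (\<Sum> y_i^2)^(3/2) for n reals summing to zero.  The latter
  follows from |y_i| \<le> c = sqrt ((n - 1) / n \<Sum> y_j^2) by summing (c - y_i) (y_i + c / (n - 1))^2 \<ge> 0.
*)
theory Submission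
  imports Defs "HOL-Computational_Algebra.Fundamental_Theorem_Algebra" "HOL-Analysis.Convex"
begin

lemma square_le_sum_squares_of_sum_eq_0:
  fixes y :: "'a \<Rightarrow> real"
  assumes "finite A" "sum y A = 0" "i \<in> A"
  shows "card A * (y i)\<^sup>2 \<le> (real (card A) - 1) * (\<Sum>j\<in>A. (y j)\<^sup>2)"
proof -
  define B where "B = A - {i}"
  have "Suc (card B) = card A"
    unfolding B_def using assms(1,3) by (rule card_Suc_Diff1)
  then have card_B: "real (card B) = real (card A) - 1" by linarith
  have "y i = - sum y B"
    using assms by (simp add: B_def sum.remove)
  then have "(y i)\<^sup>2 \<le> (\<Sum>j\<in>B. (y j)\<^sup>2) * (real (card A) - 1)"
    using sum_squared_le_sum_of_squares[of y B] card_B by simp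
  moreover have "(\<Sum>j\<in>A. (y j)\<^sup>2) = (y i)\<^sup>2 + (\<Sum>j\<in>B. (y j)\<^sup>2)"
    using assms by (simp add: B_def sum.remove)
  ultimately show ?thesis
    by (simp add: algebra_simps)
qed

lemma sum_cube_le_of_sum_eq_0:
  fixes y :: "'a \<Rightarrow> real"
  assumes "finite A" "2 \<le> card A" "sum y A = 0"
  shows "(\<Sum>i\<in>A. y i ^ 3)
    \<le> (real (card A) - 2) / sqrt (card A * (real (card A) - 1)) * sqrt (\<Sum>i\<in>A. (y i)\<^sup>2) ^ 3"
proof -
  define n where "n = real (card A)"
  define S where "S = (\<Sum>i\<in>A. (y i)\<^sup>2)"
  define k where "k = sqrt (n * (n - 1))"
  define s where "s = sqrt S"
  define c where "c = (n - 1) * s / k"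
  define d where "d = s / k"
  have n2: "2 \<le> n" using assms by (simp add: n_def)
  then have k_pos: "0 < k" and k_sq: "k\<^sup>2 = n * (n - 1)"
    by (simp_all add: k_def)
  have "0 \<le> S" by (simp add: S_def sum_nonneg)
  then have s_sq: "s\<^sup>2 = S" and "0 \<le> s" by (simp_all add: s_def)
  have abs_le: "\<bar>y i\<bar> \<le> c" if "i \<in> A" for i
  proof -
    have "n * (y i)\<^sup>2 \<le> (n - 1) * S"
      using square_le_sum_squares_of_sum_eq_0[OF assms(1,3) that] by (simp add: n_def S_def)
    also have "\<dots> = n * (n - 1)\<^sup>2 * S / (n * (n - 1))"
      using n2 by (simp add: power2_eq_square)
    also have "\<dots> = n * c\<^sup>2"
      by (simp add: c_def power_divide power_mult_distrib k_sq s_sq)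
    finally have "\<bar>y i\<bar>\<^sup>2 \<le> c\<^sup>2" using n2 by simp
    moreover have "0 \<le> c" using \<open>0 \<le> s\<close> k_pos n2 by (simp add: c_def)
    ultimately show ?thesis by (rule power2_le_imp_le)
  qed
  \<comment> \<open>\<open>d = c / (n - 1)\<close> makes the estimate sharp: equality when one \<open>y i\<close> equals \<open>c\<close> and the others are equal.\<close>
  have cube_le: "y i ^ 3 \<le> (c - 2 * d) * (y i)\<^sup>2 + (2 * c * d - d\<^sup>2) * y i + c * d\<^sup>2"
    if "i \<in> A" for i
  proof -
    have "0 \<le> (c - y i) * (y i + d)\<^sup>2" using abs_le[OF that] by simp
    then show ?thesis by (simp add: algebra_simps power2_eq_square power3_eq_cube)
  qed
  have "(\<Sum>i\<in>A. y i ^ 3)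
      \<le> (\<Sum>i\<in>A. (c - 2 * d) * (y i)\<^sup>2 + (2 * c * d - d\<^sup>2) * y i + c * d\<^sup>2)"
    using cube_le by (rule sum_mono)
  also have "\<dots> = (c - 2 * d) * S + n * c * d\<^sup>2"
    using assms(3) by (simp add: sum.distrib S_def n_def flip: sum_distrib_left)
  also have "\<dots> = (n - 3) / k * s ^ 3 + (n * (n - 1)) * s ^ 3 / k ^ 3"
    unfolding c_def d_def s_sq[symmetric]
    using k_pos by (simp add: field_simps power2_eq_square power3_eq_cube)
  also have "\<dots> = (n - 2) / k * s ^ 3"
    unfolding k_sq[symmetric]
    using k_pos by (simp add: field_simps power2_eq_square power3_eq_cube)
  finally show ?thesis by (simp add: n_def k_def s_def S_def)
qed

lemma abs_sum_cube_le_of_sum_eq_0: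
  fixes y :: "'a \<Rightarrow> real"
  assumes "finite A" "2 \<le> card A" "sum y A = 0"
  shows "\<bar>\<Sum>i\<in>A. y i ^ 3\<bar>
    \<le> (real (card A) - 2) / sqrt (card A * (real (card A) - 1)) * sqrt (\<Sum>i\<in>A. (y i)\<^sup>2) ^ 3"
proof -
  have "- (\<Sum>i\<in>A. y i ^ 3) = (\<Sum>i\<in>A. (- y i) ^ 3)"
    by (simp add: sum_negf)
  also have "\<dots> \<le> (real (card A) - 2) / sqrt (card A * (real (card A) - 1)) * sqrt (\<Sum>i\<in>A. (y i)\<^sup>2) ^ 3"
    using sum_cube_le_of_sum_eq_0[of A "\<lambda>i. - y i"] assms by (simp add: sum_negf)
  finally show ?thesis
    using sum_cube_le_of_sum_eq_0[OF assms] by (simp only: abs_le_iff)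
qed

lemma abs_third_central_moment_le:
  fixes a :: "'a \<Rightarrow> real"
  assumes "finite A" "2 \<le> card A"
  defines "n \<equiv> real (card A)"
  shows "\<bar>(\<Sum>i\<in>A. a i ^ 3) - 3 * (\<Sum>i\<in>A. a i) * (\<Sum>i\<in>A. (a i)\<^sup>2) / n + 2 * (\<Sum>i\<in>A. a i) ^ 3 / n\<^sup>2\<bar>
    \<le> (n - 2) / sqrt (n * (n - 1)) * sqrt ((\<Sum>i\<in>A. (a i)\<^sup>2) - (\<Sum>i\<in>A. a i)\<^sup>2 / n) ^ 3"
proof -
  define m where "m = (\<Sum>i\<in>A. a i) / n"
  have "0 < n" using assms by (simp add: n_def)
  have centered: "(\<Sum>i\<in>A. a i - m) = 0"
    using \<open>0 < n\<close> by (simp add: sum_subtractf m_def flip: n_def)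
  have "(\<Sum>i\<in>A. (a i - m)\<^sup>2) = (\<Sum>i\<in>A. (a i)\<^sup>2) - 2 * m * (\<Sum>i\<in>A. a i) + n * m\<^sup>2"
  proof -
    have "(a i - m)\<^sup>2 = (a i)\<^sup>2 - 2 * m * a i + m\<^sup>2" for i
      by (simp add: power2_eq_square algebra_simps)
    then show ?thesis
      by (simp add: sum.distrib sum_subtractf flip: sum_distrib_left n_def)
  qed
  also have "\<dots> = (\<Sum>i\<in>A. (a i)\<^sup>2) - (\<Sum>i\<in>A. a i)\<^sup>2 / n"
    using \<open>0 < n\<close> by (simp add: m_def power2_eq_square field_simps)
  finally have square: "(\<Sum>i\<in>A. (a i - m)\<^sup>2) = (\<Sum>i\<in>A. (a i)\<^sup>2) - (\<Sum>i\<in>A. a i)\<^sup>2 / n" .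
  have "(\<Sum>i\<in>A. (a i - m) ^ 3)
      = (\<Sum>i\<in>A. a i ^ 3) - 3 * m * (\<Sum>i\<in>A. (a i)\<^sup>2) + 3 * m\<^sup>2 * (\<Sum>i\<in>A. a i) - n * m ^ 3"
  proof -
    have "(a i - m) ^ 3 = a i ^ 3 - 3 * m * (a i)\<^sup>2 + 3 * m\<^sup>2 * a i - m ^ 3" for i
      by (simp add: power2_eq_square power3_eq_cube algebra_simps)
    then show ?thesis
      by (simp add: sum.distrib sum_subtractf flip: sum_distrib_left n_def)
  qed
  also have "\<dots> = (\<Sum>i\<in>A. a i ^ 3) - 3 * (\<Sum>i\<in>A. a i) * (\<Sum>i\<in>A. (a i)\<^sup>2) / n
      + 2 * (\<Sum>i\<in>A. a i) ^ 3 / n\<^sup>2"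
    using \<open>0 < n\<close> by (simp add: m_def power2_eq_square power3_eq_cube field_simps)
  finally have cube: "(\<Sum>i\<in>A. (a i - m) ^ 3) = \<dots>" .
  show ?thesis
    using abs_sum_cube_le_of_sum_eq_0[OF assms(1,2) centered]
    unfolding square cube n_def[symmetric] .
qed

lemma map_poly_of_real_mult:
  fixes p q :: "real poly"
  shows "map_poly of_real (p * q) = (map_poly of_real p * map_poly of_real q :: 'a::{real_algebra_1, comm_ring_1} poly)"
  by (rule poly_eqI) (simp add: coeff_map_poly coeff_mult)

lemma map_poly_of_real_prod:
  fixes f :: "'b \<Rightarrow> real poly"
  shows "map_poly of_real (\<Prod>i\<in>A. f i) = (\<Prod>i\<in>A. map_poly of_real (f i) :: 'a::{real_algebra_1, comm_ring_1} poly)"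
  by (induction A rule: infinite_finite_induct) (simp_all add: map_poly_of_real_mult)

lemma map_poly_of_real_eq_iff:
  "(map_poly of_real p :: 'a::real_algebra_1 poly) = map_poly of_real q \<longleftrightarrow> p = q"
  by (metis coeff_map_poly of_real_0 of_real_eq_iff poly_eqI)

lemma poly_map_poly_of_real:
  "poly (map_poly of_real p) (of_real x) = (of_real (poly p x) :: 'a::{real_algebra_1, comm_ring_1})"
  by (induction p) (simp_all add: map_poly_pCons)

lemma real_poly_eq_smult_prod_linear:
  fixes p :: "real poly"
  assumes "\<And>z. poly (map_poly complex_of_real p) z = 0 \<Longrightarrow> z \<in> \<real>"
  obtains a where "p = smult (lead_coeff p) (\<Prod>i<degree p. [:- a i, 1:])"
proof -
  let ?q = "map_poly complex_of_real p"
  obtain z where z: "smult (lead_coeff ?q) (\<Prod>i<degree ?q. [:- z i, 1:]) = ?q"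
    by (rule complex_poly_decompose')
  have deg: "degree ?q = degree p" by (simp add: degree_map_poly)
  have real: "z i = of_real (Re (z i))" if "i < degree p" for i
  proof -
    have "poly (\<Prod>j<degree p. [:- z j, 1:]) (z i) = 0"
      using that by (auto simp: poly_prod)
    then have "poly ?q (z i) = 0" by (subst z[symmetric]) (simp add: deg)
    then show ?thesis using assms by (simp add: complex_is_Real_iff)
  qed
  have "map_poly of_real (\<Prod>i<degree p. [:- Re (z i), 1:]) = (\<Prod>i<degree p. [:- z i, 1:])"
    using real by (auto simp: map_poly_of_real_prod map_poly_pCons intro!: prod.cong)
  then have "map_poly of_real (smult (lead_coeff p) (\<Prod>i<degree p. [:- Re (z i), 1:])) = ?q"
    by (subst z[symmetric]) (simp add: map_poly_smult deg coeff_map_poly)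
  then have "p = smult (lead_coeff p) (\<Prod>i<degree p. [:- Re (z i), 1:])"
    by (simp only: map_poly_of_real_eq_iff)
  then show ?thesis by (rule that)
qed

lemma reflect_poly_eq_prod_of_positive_roots:
  fixes p :: "real poly"
  assumes "lead_coeff p = 1"
    and "\<And>z. poly (map_poly complex_of_real p) z = 0 \<Longrightarrow> z \<in> \<real> \<and> 0 < Re z"
  obtains a where "\<And>i. i < degree p \<Longrightarrow> 0 < a i" "reflect_poly p = (\<Prod>i<degree p. [:1, - a i:])"
proof -
  obtain a where "p = smult (lead_coeff p) (\<Prod>i<degree p. [:- a i, 1:])"
    using real_poly_eq_smult_prod_linear assms(2) by blast
  with assms(1) have p_prod: "p = (\<Prod>i<degree p. [:- a i, 1:])" by simp
  show ?thesis
  proof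
    fix i assume "i < degree p"
    then have "poly p (a i) = 0" by (subst p_prod) (auto simp: poly_prod)
    then show "0 < a i"
      using assms(2)[of "of_real (a i)"] by (simp add: poly_map_poly_of_real)
  next
    show "reflect_poly p = (\<Prod>i<degree p. [:1, - a i:])"
      by (subst p_prod) (simp add: reflect_poly_prod reflect_poly_pCons' monom_Suc monom_0)
  qed
qed

lemma coeff_prod_reflected_linear_sign:
  fixes a :: "'b \<Rightarrow> 'a::linordered_idom"
  assumes "finite A" "\<And>i. i \<in> A \<Longrightarrow> 0 < a i" "k \<le> card A"
  shows "0 < (-1) ^ k * coeff (\<Prod>i\<in>A. [:1, - a i:]) k"
  using assms
proof (induction A arbitrary: k rule: finite_induct)
  case empty
  then show ?case by simp
next
  case (insert b A)
  let ?q = "\<Prod>i\<in>A. [:1, - a i:]"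
  have prod_insert: "(\<Prod>i\<in>insert b A. [:1, - a i:]) = [:1, - a b:] * ?q"
    using insert(1,2) by simp
  have "degree ?q \<le> (\<Sum>i\<in>A. degree [:1, - a i:])"
    using degree_prod_sum_le[OF \<open>finite A\<close>, of "\<lambda>i. [:1, - a i:]"] by (simp only: comp_def)
  also have "\<dots> \<le> card A"
    using sum_mono[of A "\<lambda>i. degree [:1, - a i:]" "\<lambda>_. 1"] by simp
  finally have beyond_degree: "0 \<le> (-1) ^ k * coeff ?q k" if "card A < k" for k
    using that by (simp add: coeff_eq_0)
  show ?case
  proof (cases k)
    case 0
    then show ?thesis using insert.IH[of 0] insert.prems by (simp add: prod_insert)
  next
    case (Suc j)
    have "(-1) ^ k * coeff ([:1, - a b:] * ?q) k
        = (-1) ^ k * coeff ?q k + a b * ((-1) ^ j * coeff ?q j)"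
      by (simp add: Suc algebra_simps)
    moreover have "0 \<le> (-1) ^ k * coeff ?q k"
      using insert beyond_degree[of k] by (cases "k \<le> card A") (auto intro: less_imp_le)
    moreover have "0 < a b * ((-1) ^ j * coeff ?q j)"
      using insert Suc by simp
    ultimately show ?thesis by (simp add: prod_insert)
  qed
qed

lemma coeff_prod_reflected_linear_newton:
  fixes a :: "'b \<Rightarrow> 'a::comm_ring_1"
  assumes "finite A"
  shows "coeff (\<Prod>i\<in>A. [:1, - a i:]) 1 = - (\<Sum>i\<in>A. a i)"
    and "2 * coeff (\<Prod>i\<in>A. [:1, - a i:]) 2 = (\<Sum>i\<in>A. a i)\<^sup>2 - (\<Sum>i\<in>A. (a i)\<^sup>2)"
    and "6 * coeff (\<Prod>i\<in>A. [:1, - a i:]) 3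
      = - ((\<Sum>i\<in>A. a i) ^ 3 - 3 * (\<Sum>i\<in>A. a i) * (\<Sum>i\<in>A. (a i)\<^sup>2) + 2 * (\<Sum>i\<in>A. a i ^ 3))"
proof -
  have coeff_step: "coeff ([:1, - x:] * q) 0 = coeff q 0"
    "coeff ([:1, - x:] * q) 1 = coeff q 1 - x * coeff q 0"
    "coeff ([:1, - x:] * q) 2 = coeff q 2 - x * coeff q 1"
    "coeff ([:1, - x:] * q) 3 = coeff q 3 - x * coeff q 2" for x :: 'a and q
    by (simp_all add: coeff_pCons numeral_3_eq_3 numeral_2_eq_2 split: nat.split)
  have "coeff (\<Prod>i\<in>A. [:1, - a i:]) 0 = 1 \<and> coeff (\<Prod>i\<in>A. [:1, - a i:]) 1 = - (\<Sum>i\<in>A. a i)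
    \<and> 2 * coeff (\<Prod>i\<in>A. [:1, - a i:]) 2 = (\<Sum>i\<in>A. a i)\<^sup>2 - (\<Sum>i\<in>A. (a i)\<^sup>2)
    \<and> 6 * coeff (\<Prod>i\<in>A. [:1, - a i:]) 3
      = - ((\<Sum>i\<in>A. a i) ^ 3 - 3 * (\<Sum>i\<in>A. a i) * (\<Sum>i\<in>A. (a i)\<^sup>2) + 2 * (\<Sum>i\<in>A. a i ^ 3))"
    using assms
  proof (induction A rule: finite_induct)
    case empty
    then show ?case by simp
  next
    case (insert b A)
    then have prod_insert:
      "(\<Prod>i\<in>insert b A. [:1, - a i:]) = [:1, - a b:] * (\<Prod>i\<in>A. [:1, - a i:])"
      by simp
    let ?q = "\<Prod>i\<in>A. [:1, - a i:]"
    from insert.IH have c0: "coeff ?q 0 = 1" and c1: "coeff ?q 1 = - (\<Sum>i\<in>A. a i)"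
      and c2: "2 * coeff ?q 2 = (\<Sum>i\<in>A. a i)\<^sup>2 - (\<Sum>i\<in>A. (a i)\<^sup>2)"
      and c3: "6 * coeff ?q 3
        = - ((\<Sum>i\<in>A. a i) ^ 3 - 3 * (\<Sum>i\<in>A. a i) * (\<Sum>i\<in>A. (a i)\<^sup>2) + 2 * (\<Sum>i\<in>A. a i ^ 3))"
      by blast+
    have "2 * coeff ([:1, - a b:] * ?q) 2 = 2 * coeff ?q 2 - 2 * a b * coeff ?q 1"
      and "6 * coeff ([:1, - a b:] * ?q) 3 = 6 * coeff ?q 3 - 3 * a b * (2 * coeff ?q 2)"
      unfolding coeff_step by (simp_all add: algebra_simps)
    then show ?case
      unfolding prod_insert coeff_step(1,2) c0 c1 c2 c3 using insert(1,2)
      by (simp add: algebra_simps power2_eq_square power3_eq_cube)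
  qed
  then show "coeff (\<Prod>i\<in>A. [:1, - a i:]) 1 = - (\<Sum>i\<in>A. a i)"
    and "2 * coeff (\<Prod>i\<in>A. [:1, - a i:]) 2 = (\<Sum>i\<in>A. a i)\<^sup>2 - (\<Sum>i\<in>A. (a i)\<^sup>2)"
    and "6 * coeff (\<Prod>i\<in>A. [:1, - a i:]) 3
      = - ((\<Sum>i\<in>A. a i) ^ 3 - 3 * (\<Sum>i\<in>A. a i) * (\<Sum>i\<in>A. (a i)\<^sup>2) + 2 * (\<Sum>i\<in>A. a i ^ 3))"
    by blast+
qed

lemma sextic_coefficient_bounds_of_power_sums:
  fixes P1 P2 P3 r1 r2 r3 D :: real
  assumes r1: "r1 = - P1"
    and r2: "2 * r2 = P1\<^sup>2 - P2"
    and r3: "6 * r3 = - (P1 ^ 3 - 3 * P1 * P2 + 2 * P3)"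
    and D_def: "D = 25 * r1\<^sup>2 - 60 * r2"
    and variance: "P1\<^sup>2 \<le> 6 * P2"
    and moment: "\<bar>P3 - P1 * P2 / 2 + P1 ^ 3 / 18\<bar> \<le> 4 / sqrt 30 * sqrt (P2 - P1\<^sup>2 / 6) ^ 3"
  shows "r2 \<le> 5/12 * r1^2 \<and>
         - (1/3) * r1^2 * sqrt D + 1/225 * D powr (3/2) + 4/5 * r2 * sqrt D
            \<le> 10/9 * r1^3 - 4 * r1 * r2 + 6 * r3 \<and>
         10/9 * r1^3 - 4 * r1 * r2 + 6 * r3
            \<le> 1/3 * r1^2 * sqrt D - 1/225 * D powr (3/2) - 4/5 * r2 * sqrt D"
proof -
  define S where "S = P2 - P1\<^sup>2 / 6"
  have "0 \<le> S" using variance by (simp add: S_def)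
  have D_S: "D = 30 * S"
    using r2 unfolding D_def r1 S_def by simp
  then have "0 \<le> D" using \<open>0 \<le> S\<close> by simp
  have "10/9 * r1^3 - 4 * r1 * r2 + 6 * r3 = - 2 * (P3 - P1 * P2 / 2 + P1 ^ 3 / 18)"
  proof -
    have r2_eq: "r2 = (P1\<^sup>2 - P2) / 2" and r3_eq: "r3 = - (P1 ^ 3 - 3 * P1 * P2 + 2 * P3) / 6"
      using r2 r3 by simp_all
    show ?thesis
      unfolding r1 r2_eq r3_eq by (simp add: field_simps power2_eq_square power3_eq_cube)
  qed
  with moment have "\<bar>10/9 * r1^3 - 4 * r1 * r2 + 6 * r3\<bar> \<le> 8 / sqrt 30 * sqrt S ^ 3"
    by (simp add: S_def)
  also have "8 / sqrt 30 * sqrt S ^ 3 = 2/225 * D * sqrt D"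
    using \<open>0 \<le> S\<close> by (simp add: D_S real_sqrt_mult power3_eq_cube field_simps)
  also have "\<dots> = 1/3 * r1^2 * sqrt D - 1/225 * D powr (3/2) - 4/5 * r2 * sqrt D"
  proof -
    have "D powr (3/2) = D * sqrt D"
      using powr_mult_base[of D "1/2"] \<open>0 \<le> D\<close> by (simp add: powr_half_sqrt)
    then show ?thesis by (simp add: D_def algebra_simps)
  qed
  finally show ?thesis
    using \<open>0 \<le> D\<close> D_def by (simp add: abs_le_iff)
qed

theorem mainTheorem1:
  fixes r1 r2 r3 r4 r5 r6 :: real and f :: "real poly" and D :: real
  assumes f_def: "f = [:r6, r5, r4, r3, r2, r1, 1:]"
    and roots: "\<forall>z::complex. poly (map_poly complex_of_real f) z = 0 \<longrightarrow> z \<in> \<real> \<and> 0 < Re z"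
    and D_def: "D = 25 * r1^2 - 60 * r2"
  shows "r1 < 0 \<and>
         (r2 > 0 \<and> r2 \<le> 5/12 * r1^2) \<and>
         (r3 < 0 \<and>
         - (1/3) * r1^2 * sqrt D + 1/225 * D powr (3/2) + 4/5 * r2 * sqrt D
            \<le> 10/9 * r1^3 - 4 * r1 * r2 + 6 * r3 \<and>
         10/9 * r1^3 - 4 * r1 * r2 + 6 * r3
            \<le> 1/3 * r1^2 * sqrt D - 1/225 * D powr (3/2) - 4/5 * r2 * sqrt D) \<and>
         r4 > 0 \<and> r5 < 0"
proof -
  define q where "q = reflect_poly f"
  have "degree f = 6" "lead_coeff f = 1" by (simp_all add: f_def)
  moreover obtain a where "\<And>i. i < degree f \<Longrightarrow> 0 < a i"
    and "reflect_poly f = (\<Prod>i<degree f. [:1, - a i:])"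
    using reflect_poly_eq_prod_of_positive_roots[OF \<open>lead_coeff f = 1\<close>] roots by blast
  ultimately have a_pos: "\<And>i. i < 6 \<Longrightarrow> 0 < a i" and q_prod: "q = (\<Prod>i<6. [:1, - a i:])"
    by (simp_all add: q_def)
  have r_coeff: "r1 = coeff q 1" "r2 = coeff q 2" "r3 = coeff q 3" "r4 = coeff q 4" "r5 = coeff q 5"
    by (simp_all add: q_def f_def coeff_reflect_poly)
  have "0 < (-1) ^ k * coeff q k" if "k \<le> 6" for k
    using coeff_prod_reflected_linear_sign[of "{..<6}" a k] a_pos that by (simp add: q_prod)
  from this[of 1] this[of 2] this[of 3] this[of 4] this[of 5]
  have signs: "r1 < 0" "r2 > 0" "r3 < 0" "r4 > 0" "r5 < 0"
    by (simp_all add: r_coeff)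
  have newton: "r1 = - (\<Sum>i<6. a i)" "2 * r2 = (\<Sum>i<6. a i)\<^sup>2 - (\<Sum>i<6. (a i)\<^sup>2)"
    "6 * r3 = - ((\<Sum>i<6. a i) ^ 3 - 3 * (\<Sum>i<6. a i) * (\<Sum>i<6. (a i)\<^sup>2) + 2 * (\<Sum>i<6. a i ^ 3))"
    using coeff_prod_reflected_linear_newton[of "{..<6}" a] by (simp_all add: r_coeff q_prod)
  have variance: "(\<Sum>i<6. a i)\<^sup>2 \<le> 6 * (\<Sum>i<6. (a i)\<^sup>2)"
    using sum_squared_le_sum_of_squares[of a "{..<6}"] by simp
  have moment: "\<bar>(\<Sum>i<6. a i ^ 3) - (\<Sum>i<6. a i) * (\<Sum>i<6. (a i)\<^sup>2) / 2 + (\<Sum>i<6. a i) ^ 3 / 18\<bar>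
      \<le> 4 / sqrt 30 * sqrt ((\<Sum>i<6. (a i)\<^sup>2) - (\<Sum>i<6. a i)\<^sup>2 / 6) ^ 3"
    using abs_third_central_moment_le[of "{..<6}" a] by simp
  show ?thesis
    using signs sextic_coefficient_bounds_of_power_sums[OF newton D_def variance moment] by blast
qed

end
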